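(* No deterministic strategyproof mechanism for locating an obnoxious facility on $[0,1]$ has an approximation ratio better than $(2^p+1)^{1/p}$ for the $L_p$ social cost, for any $1\le p<\infty$. No deterministic strategyproof mechanism has an approximation ratio better than $2$ for the $L_\infty$ social cost.
   Context: Agents $i=1,\dots,n$ have private locations $x_i\in[0,1]$; a deterministic mechanism $f:[0,1]^n\to[0,1]$ outputs the facility location. Agent cost $c(x_i,y)=1-|x_i-y|$ (equivalently utility $|x_i-y|$). $f$ is strategyproof if for all $\mathbf x$, $i$, $x_i'$: $|x_i-f(\mathbf x)|\ge|x_i-f(x_i',\mathbf x_{-i})|$. $L_p$ social cost $\mathrm{sc}_p(y,\mathbf x)=(\sum_ic(x_i,y)^p)^{1/p}$, $\mathrm{sc}_\infty(y,\mathbf x)=\max_ic(x_i,y)$. $f$ has approximation ratio $\alpha$ if $\mathrm{sc}_p(f(\mathbf x),\mathbf x)\le\alpha\min_{z\in[0,1]}\mathrm{sc}_p(z,\mathbf x)$ for all profiles (over all numbers of agents). *)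

theory Defs
  imports Complex_Main
begin

definition valid_profile :: "real list \<Rightarrow> bool" where
  "valid_profile xs \<longleftrightarrow> set xs \<subseteq> {0..1}"

definition mechanism :: "(real list \<Rightarrow> real) \<Rightarrow> bool" where
  "mechanism f \<longleftrightarrow> (\<forall>xs. valid_profile xs \<longrightarrow> f xs \<in> {0..1})"

definition agent_cost :: "real \<Rightarrow> real \<Rightarrow> real" where
  "agent_cost x y = 1 - \<bar>x - y\<bar>"

definition strategyproof :: "(real list \<Rightarrow> real) \<Rightarrow> bool" where
  "strategyproof f \<longleftrightarrow>
     (\<forall>xs i x'. valid_profile xs \<longrightarrow> i < length xs \<longrightarrow> x' \<in> {0..1} \<longrightarrow>
        \<bar>xs ! i - f (xs[i := x'])\<bar> \<le> \<bar>xs ! i - f xs\<bar>)"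

definition sc_p :: "real \<Rightarrow> real \<Rightarrow> real list \<Rightarrow> real" where
  "sc_p p y xs = (\<Sum>x\<leftarrow>xs. agent_cost x y powr p) powr (1 / p)"

definition sc_inf :: "real \<Rightarrow> real list \<Rightarrow> real" where
  "sc_inf y xs = Max (set (map (\<lambda>x. agent_cost x y) xs))"

definition approx_ratio_p :: "real \<Rightarrow> (real list \<Rightarrow> real) \<Rightarrow> real \<Rightarrow> bool" where
  "approx_ratio_p p f \<alpha> \<longleftrightarrow>
     (\<forall>xs. valid_profile xs \<and> xs \<noteq> [] \<longrightarrow>
        sc_p p (f xs) xs \<le> \<alpha> * (INF z\<in>{0..1}. sc_p p z xs))"

definition approx_ratio_inf :: "(real list \<Rightarrow> real) \<Rightarrow> real \<Rightarrow> bool" where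
  "approx_ratio_inf f \<alpha> \<longleftrightarrow>
     (\<forall>xs. valid_profile xs \<and> xs \<noteq> [] \<longrightarrow>
        sc_inf (f xs) xs \<le> \<alpha> * (INF z\<in>{0..1}. sc_inf z xs))"

end

theory Submission
  imports Defs
begin

text \<open>
  A finite ratio forces \<open>f [0, 0] = 1\<close> and \<open>f [1, 1] = 0\<close>, because these unanimous
  profiles have optimal cost 0. Strategyproofness on two-agent profiles then pushes the
  compromise \<open>f [0, 1]\<close> to an endpoint, so that either \<open>f [x, 1] = 1\<close> for all \<open>x < 1/2\<close> or,
  mirror-symmetrically, \<open>f [0, y] = 0\<close> for all \<open>y > 1/2\<close>. On the profile \<open>[x, 1]\<close> the
  mechanism then pays \<open>(x\<^sup>p + 1)\<^bsup>1/p\<^esup>\<close> (respectively 1 for \<open>L\<^sub>\<infinity>\<close>), while the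
  location 0 costs only \<open>1 - x\<close>; letting \<open>x\<close> tend to \<open>1/2\<close> gives the bounds.
\<close>

lemma strategyproofD:
  "\<lbrakk>strategyproof f; valid_profile xs; i < length xs; x' \<in> {0..1}\<rbrakk>
   \<Longrightarrow> \<bar>xs ! i - f (xs[i := x'])\<bar> \<le> \<bar>xs ! i - f xs\<bar>"
  unfolding strategyproof_def by blast

lemma valid_profile_pair: "valid_profile [a, b] \<longleftrightarrow> a \<in> {0..1} \<and> b \<in> {0..1}"
  by (simp add: valid_profile_def)

lemma strategyproof_pair_fst:
  assumes "strategyproof f" "a \<in> {0..1}" "b \<in> {0..1}" "a' \<in> {0..1}"
  shows "\<bar>a - f [a', b]\<bar> \<le> \<bar>a - f [a, b]\<bar>"
  using strategyproofD[OF assms(1), of "[a, b]" 0 a'] assms(2-) by (simp add: valid_profile_pair)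

lemma strategyproof_pair_snd:
  assumes "strategyproof f" "a \<in> {0..1}" "b \<in> {0..1}" "b' \<in> {0..1}"
  shows "\<bar>b - f [a, b']\<bar> \<le> \<bar>b - f [a, b]\<bar>"
  using strategyproofD[OF assms(1), of "[a, b]" 1 b'] assms(2-) by (simp add: valid_profile_pair)

lemma mechanism_pair:
  "\<lbrakk>mechanism f; a \<in> {0..1}; b \<in> {0..1}\<rbrakk> \<Longrightarrow> f [a, b] \<in> {0..1}"
  by (simp add: mechanism_def valid_profile_pair)

lemma farthest_point_right:
  fixes a b x y :: real
  assumes "a \<le> y" "y \<le> b" "x < (a + b) / 2" "\<bar>x - b\<bar> \<le> \<bar>x - y\<bar>"
  shows "y = b"
  using assms by (auto simp: abs_if split: if_splits)

lemma farthest_point_left: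
  fixes a b x y :: real
  assumes "a \<le> y" "y \<le> b" "(a + b) / 2 < x" "\<bar>x - a\<bar> \<le> \<bar>x - y\<bar>"
  shows "y = a"
  using assms by (auto simp: abs_if split: if_splits)

context
  fixes f :: "real list \<Rightarrow> real"
  assumes mech: "mechanism f" and sp: "strategyproof f"
begin

lemma pair_fst_bounds:
  assumes "x \<in> {0..1}"
  shows "0 \<le> f [x, 1]" "f [x, 1] \<le> f [0, 1]"
  using mechanism_pair[OF mech assms, of 1] mechanism_pair[OF mech, of 0 1]
    strategyproof_pair_fst[OF sp, of 0 1 x] assms by auto

lemma pair_snd_bounds:
  assumes "y \<in> {0..1}"
  shows "f [0, 1] \<le> f [0, y]" "f [0, y] \<le> 1"
  using mechanism_pair[OF mech _ assms, of 0] mechanism_pair[OF mech, of 0 1]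
    strategyproof_pair_snd[OF sp, of 0 1 y] assms by auto

lemma pair_fst_small:
  assumes "0 \<le> x" "x < f [0, 1] / 2"
  shows "f [x, 1] = f [0, 1]"
proof -
  have x: "x \<in> {0..1}" using assms mechanism_pair[OF mech, of 0 1] by auto
  show ?thesis
    using farthest_point_right[of 0 "f [x, 1]" "f [0, 1]" x] pair_fst_bounds[OF x]
      strategyproof_pair_fst[OF sp x, of 1 0] assms(2) by simp
qed

lemma pair_fst_large:
  assumes "f [1, 1] = 0" "f [0, 1] / 2 < x" "x \<le> 1"
  shows "f [x, 1] = 0"
proof -
  have x: "x \<in> {0..1}" using assms mechanism_pair[OF mech, of 0 1] by auto
  show ?thesis
    using farthest_point_left[of 0 "f [x, 1]" "f [0, 1]" x] pair_fst_bounds[OF x]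
      strategyproof_pair_fst[OF sp x, of 1 1] assms by simp
qed

lemma pair_snd_small:
  assumes "f [0, 0] = 1" "0 \<le> y" "y < (f [0, 1] + 1) / 2"
  shows "f [0, y] = 1"
proof -
  have y: "y \<in> {0..1}" using assms mechanism_pair[OF mech, of 0 1] by auto
  show ?thesis
    using farthest_point_right[of "f [0, 1]" "f [0, y]" 1 y] pair_snd_bounds[OF y]
      strategyproof_pair_snd[OF sp _ y, of 0 0] assms by simp
qed

lemma pair_snd_large:
  assumes "(f [0, 1] + 1) / 2 < y" "y \<le> 1"
  shows "f [0, y] = f [0, 1]"
proof -
  have y: "y \<in> {0..1}" using assms mechanism_pair[OF mech, of 0 1] by auto
  show ?thesis
    using farthest_point_left[of "f [0, 1]" "f [0, y]" 1 y] pair_snd_bounds[OF y]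
      strategyproof_pair_snd[OF sp _ y, of 0 1] assms by simp
qed

lemma pair_center_extreme:
  assumes f00: "f [0, 0] = 1" and f11: "f [1, 1] = 0"
  shows "f [0, 1] = 0 \<or> f [0, 1] = 1"
proof (rule ccontr)
  assume "\<not> (f [0, 1] = 0 \<or> f [0, 1] = 1)"
  then have u: "0 < f [0, 1]" "f [0, 1] < 1" using mechanism_pair[OF mech, of 0 1] by auto
  \<comment> \<open>Agent 1 at \<open>x\<close> deviating to 0 forces \<open>f [x, y] = 1\<close>; then agent 2 at \<open>y > 1/2\<close>
    gains by reporting 1, which moves the facility to 0.\<close>
  define x y where "x = (f [0, 1] + 1) / 4" and "y = (f [0, 1] + 2) / 4"
  have x: "x \<in> {0..1}" "f [0, 1] / 2 < x" "x < 1/2" using u by (auto simp: x_def)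
  have y: "y \<in> {0..1}" "1/2 < y" "y < (f [0, 1] + 1) / 2" using u by (auto simp: y_def)
  have "f [0, y] = 1" using pair_snd_small[OF f00, of y] y by auto
  then have "f [x, y] = 1"
    using farthest_point_right[of 0 "f [x, y]" 1 x] mechanism_pair[OF mech x(1) y(1)]
      strategyproof_pair_fst[OF sp x(1) y(1), of 0] x by auto
  moreover have "f [x, 1] = 0" using pair_fst_large[OF f11, of x] x by auto
  ultimately show False
    using strategyproof_pair_snd[OF sp x(1) y(1), of 1] y by auto
qed

lemma strategyproof_pair_dichotomy:
  assumes "f [0, 0] = 1" and "f [1, 1] = 0"
  shows "(\<forall>x. 0 \<le> x \<and> x < 1/2 \<longrightarrow> f [x, 1] = 1) \<or> (\<forall>y. 1/2 < y \<and> y \<le> 1 \<longrightarrow> f [0, y] = 0)"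
proof (cases "f [0, 1] = 1")
  case True
  then show ?thesis using pair_fst_small by metis
next
  case False
  then have "f [0, 1] = 0" using pair_center_extreme[OF assms] by simp
  then show ?thesis using pair_snd_large by (metis add_0)
qed

end

definition approx_ratio :: "(real \<Rightarrow> real list \<Rightarrow> real) \<Rightarrow> (real list \<Rightarrow> real) \<Rightarrow> real \<Rightarrow> bool" where
  "approx_ratio sc f \<alpha> \<longleftrightarrow>
     (\<forall>xs. valid_profile xs \<and> xs \<noteq> [] \<longrightarrow> sc (f xs) xs \<le> \<alpha> * (INF z\<in>{0..1}. sc z xs))"

lemma approx_ratio_p_iff: "approx_ratio_p p f \<alpha> \<longleftrightarrow> approx_ratio (sc_p p) f \<alpha>"
  by (simp add: approx_ratio_p_def approx_ratio_def)

lemma approx_ratio_inf_iff: "approx_ratio_inf f \<alpha> \<longleftrightarrow> approx_ratio sc_inf f \<alpha>"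
  by (simp add: approx_ratio_inf_def approx_ratio_def)

locale obnoxious_social_cost =
  fixes sc :: "real \<Rightarrow> real list \<Rightarrow> real"
  assumes nonneg: "\<lbrakk>valid_profile xs; xs \<noteq> []; y \<in> {0..1}\<rbrakk> \<Longrightarrow> 0 \<le> sc y xs"
    and eq_0_iff: "\<lbrakk>valid_profile xs; xs \<noteq> []; y \<in> {0..1}\<rbrakk>
                     \<Longrightarrow> sc y xs = 0 \<longleftrightarrow> (\<forall>x\<in>set xs. agent_cost x y = 0)"
    \<comment> \<open>reversal makes the mirror image of the profile \<open>[x, 1]\<close> the profile \<open>[0, 1 - x]\<close>\<close>
    and reflect: "sc (1 - y) (rev (map (\<lambda>x. 1 - x) xs)) = sc y xs"
begin

lemma INF_nonneg: "\<lbrakk>valid_profile xs; xs \<noteq> []\<rbrakk> \<Longrightarrow> 0 \<le> (INF z\<in>{0..1}. sc z xs)"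
  by (rule cINF_greatest) (auto intro: nonneg)

lemma INF_le: "\<lbrakk>valid_profile xs; xs \<noteq> []; z \<in> {0..1}\<rbrakk> \<Longrightarrow> (INF z\<in>{0..1}. sc z xs) \<le> sc z xs"
  by (rule cINF_lower) (auto intro!: bdd_belowI2[where m = 0] nonneg)

lemma approx_ratio_pos:
  assumes "mechanism f" and "approx_ratio sc f \<alpha>"
  shows "0 < \<alpha>"
proof -
  \<comment> \<open>a single agent at \<open>1/2\<close> has positive cost wherever the facility is\<close>
  have valid: "valid_profile [1/2]" by (simp add: valid_profile_def)
  have "f [1/2] \<in> {0..1}" using assms(1) valid by (simp add: mechanism_def)
  moreover have "agent_cost (1/2) (f [1/2]) \<noteq> 0" using calculation by (auto simp: agent_cost_def)
  ultimately have "0 < sc (f [1/2]) [1/2]"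
    using nonneg[OF valid] eq_0_iff[OF valid] by (simp add: order_less_le)
  also have "sc (f [1/2]) [1/2] \<le> \<alpha> * (INF z\<in>{0..1}. sc z [1/2])"
    using assms(2) valid by (simp add: approx_ratio_def)
  finally show ?thesis using INF_nonneg[OF valid] by (simp add: zero_less_mult_iff)
qed

lemma approx_ratio_le:
  assumes "mechanism f" "approx_ratio sc f \<alpha>" "valid_profile xs" "xs \<noteq> []" "z \<in> {0..1}"
  shows "sc (f xs) xs \<le> \<alpha> * sc z xs"
proof -
  have "sc (f xs) xs \<le> \<alpha> * (INF z\<in>{0..1}. sc z xs)"
    using assms(2-4) by (simp add: approx_ratio_def)
  also have "\<dots> \<le> \<alpha> * sc z xs"
    using approx_ratio_pos[OF assms(1,2)] INF_le[OF assms(3-5)] by simp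
  finally show ?thesis .
qed

lemma approx_ratio_unanimous:
  assumes "mechanism f" "approx_ratio sc f \<alpha>" "a \<in> {0, 1}"
  shows "f [a, a] = 1 - a"
proof -
  have valid: "valid_profile [a, a]" using assms(3) by (auto simp: valid_profile_def)
  have f: "f [a, a] \<in> {0..1}" using assms(1) valid by (simp add: mechanism_def)
  have "sc (1 - a) [a, a] = 0"
    using eq_0_iff[OF valid] assms(3) by (auto simp: agent_cost_def)
  then have "sc (f [a, a]) [a, a] \<le> 0"
    using approx_ratio_le[OF assms(1,2) valid, of "1 - a"] assms(3) by auto
  then have "sc (f [a, a]) [a, a] = 0" using nonneg[OF valid _ f] by simp
  then have "\<bar>a - f [a, a]\<bar> = 1" using eq_0_iff[OF valid _ f] by (simp add: agent_cost_def)
  then show ?thesis using f assms(3) by auto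
qed

lemma approx_ratio_two_agents:
  assumes mech: "mechanism f" and sp: "strategyproof f" and ratio: "approx_ratio sc f \<alpha>"
    and x: "0 \<le> x" "x < 1/2"
  shows "sc 1 [x, 1] \<le> \<alpha> * sc 0 [x, 1]"
proof -
  have "f [0, 0] = 1" "f [1, 1] = 0"
    using approx_ratio_unanimous[OF mech ratio, of 0] approx_ratio_unanimous[OF mech ratio, of 1] by simp_all
  then consider "f [x, 1] = 1" | "f [0, 1 - x] = 0"
    using strategyproof_pair_dichotomy[OF mech sp] x by force
  then show ?thesis
  proof cases
    case 1
    then show ?thesis using approx_ratio_le[OF mech ratio, of "[x, 1]" 0] x by (simp add: valid_profile_pair)
  next
    case 2
    then have "sc 0 [0, 1 - x] \<le> \<alpha> * sc 1 [0, 1 - x]"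
      using approx_ratio_le[OF mech ratio, of "[0, 1 - x]" 1] x by (simp add: valid_profile_pair)
    moreover have "sc 0 [0, 1 - x] = sc 1 [x, 1]" "sc 1 [0, 1 - x] = sc 0 [x, 1]"
      using reflect[of 1 "[x, 1]"] reflect[of 0 "[x, 1]"] by simp_all
    ultimately show ?thesis by simp
  qed
qed

end

lemma obnoxious_social_cost_sc_p: "obnoxious_social_cost (sc_p p)"
proof
  fix xs y
  show "0 \<le> sc_p p y xs" by (simp add: sc_p_def)
  show "sc_p p y xs = 0 \<longleftrightarrow> (\<forall>x\<in>set xs. agent_cost x y = 0)"
    unfolding sc_p_def powr_eq_0_iff by (subst sum_list_nonneg_eq_0_iff) auto
  show "sc_p p (1 - y) (rev (map (\<lambda>x. 1 - x) xs)) = sc_p p y xs"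
    by (simp add: sc_p_def agent_cost_def rev_map[symmetric] o_def abs_minus_commute)
qed

lemma obnoxious_social_cost_sc_inf: "obnoxious_social_cost sc_inf"
proof
  fix xs :: "real list" and y :: real
  assume "valid_profile xs" "xs \<noteq> []" "y \<in> {0..1}"
  then have costs: "x \<in> set xs \<Longrightarrow> 0 \<le> agent_cost x y" for x
    by (fastforce simp: valid_profile_def agent_cost_def abs_le_iff)
  have upper: "x \<in> set xs \<Longrightarrow> agent_cost x y \<le> sc_inf y xs" for x
    by (simp add: sc_inf_def)
  have "sc_inf y xs \<in> (\<lambda>x. agent_cost x y) ` set xs"
    unfolding sc_inf_def set_map using \<open>xs \<noteq> []\<close> by (intro Max_in) auto
  then obtain x0 where "x0 \<in> set xs" "sc_inf y xs = agent_cost x0 y" by blast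
  then show "0 \<le> sc_inf y xs" and "sc_inf y xs = 0 \<longleftrightarrow> (\<forall>x\<in>set xs. agent_cost x y = 0)"
    using costs upper by (auto intro: antisym)
next
  fix xs y
  show "sc_inf (1 - y) (rev (map (\<lambda>x. 1 - x) xs)) = sc_inf y xs"
    by (simp add: sc_inf_def agent_cost_def image_image abs_minus_commute)
qed

lemma limit_bound_at_half:
  fixes g :: "real \<Rightarrow> real"
  assumes "(g \<longlongrightarrow> L) (at_left (1/2))" and "\<And>x. 0 \<le> x \<Longrightarrow> x < 1/2 \<Longrightarrow> g x \<le> \<alpha> * (1 - x)"
  shows "2 * L \<le> \<alpha>"
proof -
  have "eventually (\<lambda>x. g x \<le> \<alpha> * (1 - x)) (at_left (1/2::real))"
    by (rule eventually_mono[OF eventually_at_left_real[of 0]]) (auto intro: assms(2))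
  moreover have "((\<lambda>x. \<alpha> * (1 - x)) \<longlongrightarrow> \<alpha> * (1 - 1/2)) (at_left (1/2::real))"
    by (intro tendsto_intros)
  ultimately have "L \<le> \<alpha> * (1 - 1/2)"
    using tendsto_le[OF trivial_limit_at_left_real _ assms(1)] by blast
  then show ?thesis by simp
qed

lemma sc_p_lower_bound:
  assumes "mechanism f" "strategyproof f" "approx_ratio_p p f \<alpha>" "0 < p"
  shows "(2 powr p + 1) powr (1 / p) \<le> \<alpha>"
proof -
  have "(x powr p + 1) powr (1 / p) \<le> \<alpha> * (1 - x)" if "0 \<le> x" "x < 1/2" for x
    using obnoxious_social_cost.approx_ratio_two_agents[OF obnoxious_social_cost_sc_p assms(1,2), of p \<alpha> x]
      assms(3,4) that by (simp add: approx_ratio_p_iff sc_p_def agent_cost_def powr_powr)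
  moreover have "((\<lambda>x. (x powr p + 1) powr (1 / p)) \<longlongrightarrow> ((1/2) powr p + 1) powr (1 / p)) (at_left (1/2))"
    using assms(4) by (intro tendsto_intros) auto
  ultimately have "2 * ((1/2) powr p + 1) powr (1 / p) \<le> \<alpha>" by (rule limit_bound_at_half[rotated])
  moreover have "2 * ((1/2) powr p + 1) powr (1 / p) = (2 powr p + 1) powr (1 / p)"
  proof -
    have "2 powr p + 1 = 2 powr p * ((1/2) powr p + 1)" by (simp add: distrib_left powr_divide)
    then show ?thesis using assms(4) by (simp add: powr_mult powr_powr)
  qed
  ultimately show ?thesis by simp
qed

lemma sc_inf_lower_bound:
  assumes "mechanism f" "strategyproof f" "approx_ratio_inf f \<alpha>"
  shows "2 \<le> \<alpha>"
proof -
  have "1 \<le> \<alpha> * (1 - x)" if "0 \<le> x" "x < 1/2" for x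
    using obnoxious_social_cost.approx_ratio_two_agents[OF obnoxious_social_cost_sc_inf assms(1,2), of \<alpha> x]
      assms(3) that by (simp add: approx_ratio_inf_iff sc_inf_def agent_cost_def)
  then show ?thesis using limit_bound_at_half[of "\<lambda>_. 1" 1 \<alpha>] by simp
qed

theorem theorem11:
  fixes f :: "real list \<Rightarrow> real"
  assumes "mechanism f" and "strategyproof f"
  shows "(\<forall>p \<alpha>. 1 \<le> p \<and> approx_ratio_p p f \<alpha> \<longrightarrow> (2 powr p + 1) powr (1 / p) \<le> \<alpha>)
       \<and> (\<forall>\<alpha>. approx_ratio_inf f \<alpha> \<longrightarrow> 2 \<le> \<alpha>)"
  using sc_p_lower_bound[OF assms] sc_inf_lower_bound[OF assms] by auto

end
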